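(* Let $m\in\mathbb{N}$ and let $\mathcal{P}_m$ be the set of all functions of the form $$p(z)=ib+\sum_{j=1}^m a_j\frac{s_j+z}{s_j-z},\quad z\in\mathbb{D},$$ where $b\in\mathbb{R}$, $a_1,\dots,a_m>0$, and $s_1,\dots,s_m$ are pairwise distinct points of $\partial\mathbb{D}$. Then $p\mapsto1/p$ is an involution of $\mathcal{P}_m$ onto itself.
   Context: $\mathbb{D}$ denotes the open unit disk. *)

theory Defs
  imports "HOL-Analysis.Analysis"
begin

text \<open>Functions are total in HOL; membership only constrains the values on the
  open unit disk (ball 0 1).\<close>

definition Pm :: "nat \<Rightarrow> (complex \<Rightarrow> complex) set" where
  "Pm m = {p. \<exists>(b::real) (a::nat \<Rightarrow> real) (s::nat \<Rightarrow> complex).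
              (\<forall>j\<in>{1..m}. a j > 0) \<and>
              (\<forall>j\<in>{1..m}. cmod (s j) = 1) \<and>
              inj_on s {1..m} \<and>
              (\<forall>z\<in>ball 0 1. p z = \<i> * complex_of_real b +
                   (\<Sum>j=1..m. complex_of_real (a j) * ((s j + z) / (s j - z))))}"

end

theory Submission
  imports Defs "HOL-Computational_Algebra.Fundamental_Theorem_Algebra"
begin

(* Write p = N / D with D(z) = prod_j (z - s_j). Since
   Re p(z) = (1 - |z|^2) sum_j a_j / |s_j - z|^2, every zero of p lies on the unit circle, and there
   z p'(z) = -2 sum_j a_j / |s_j - z|^2 is a negative real number. So the numerator N, which has
   degree m and does not vanish at the poles s_j, has m simple zeros t_1, ..., t_m on the circle,
   and the partial fraction expansion of 1/p = D/N is a sum of Herglotz kernels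
   (t_k + z)/(t_k - z) with the positive weights -1/(2 t_k p'(t_k)) plus a constant, which is
   purely imaginary because Re (1/p) vanishes on the circle. *)

lemma Re_herglotz_kernel:
  assumes "cmod t = 1"
  shows "Re ((t + z) / (t - z)) = (1 - (cmod z)\<^sup>2) / (cmod (t - z))\<^sup>2"
proof -
  have "Re (t + z) * Re (t - z) + Im (t + z) * Im (t - z) = (cmod t)\<^sup>2 - (cmod z)\<^sup>2"
    unfolding cmod_power2 by (simp add: power2_eq_square algebra_simps)
  then show ?thesis
    using assms by (simp add: Re_divide')
qed

lemma Re_of_real_mult: "Re (of_real r * z) = r * Re z"
  by simp

lemma unit_circle_diff_square:
  assumes "cmod s = 1" "cmod t = 1"
  shows "(s - t)\<^sup>2 = - s * t * of_real ((cmod (s - t))\<^sup>2)"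
proof -
  have "s * cnj s = 1" "t * cnj t = 1"
    using assms complex_norm_square[of s] complex_norm_square[of t] by simp_all
  then have "- s * t * ((s - t) * cnj (s - t)) = (s - t) * (s * (t * cnj t) - t * (s * cnj s))"
    by (simp add: algebra_simps)
  also have "\<dots> = (s - t)\<^sup>2"
    using \<open>s * cnj s = 1\<close> \<open>t * cnj t = 1\<close> by (simp add: power2_eq_square)
  finally show ?thesis
    unfolding complex_norm_square by (rule sym)
qed

lemma infinite_unit_circle: "infinite (sphere (0::complex) 1)"
proof -
  have "uncountable (sphere (0::complex) 1)"
    by (rule connected_uncountable[of _ 1 "-1"]) (auto intro: connected_sphere)
  then show ?thesis
    using countable_finite by blast
qed

lemma card_roots_rsquarefree:
  fixes p :: "complex poly"
  assumes "rsquarefree p"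
  shows "card {z. poly p z = 0} = degree p"
proof -
  have "p \<noteq> 0"
    using assms by (simp add: rsquarefree_def)
  have "degree p = degree (smult (lead_coeff p) (\<Prod>z | poly p z = 0. [:-z, 1:]))"
    using complex_poly_decompose_rsquarefree[OF assms] by simp
  also have "\<dots> = card {z. poly p z = 0}"
    using \<open>p \<noteq> 0\<close> by (simp add: degree_prod_sum_eq)
  finally show ?thesis ..
qed

lemma synthetic_div_root:
  fixes p :: "'a::comm_ring_1 poly"
  assumes "poly p a = 0"
  shows "p = [:-a, 1:] * synthetic_div p a"
  using synthetic_div_correct'[of a p] assms by simp

lemma poly_synthetic_div_root:
  fixes p :: "'a::field poly"
  assumes "poly p a = 0" "z \<noteq> a"
  shows "poly (synthetic_div p a) z = poly p z / (z - a)"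
proof -
  have "poly p z = (z - a) * poly (synthetic_div p a) z"
    using arg_cong[OF synthetic_div_root[OF assms(1)], of "\<lambda>q. poly q z"] by (simp add: algebra_simps)
  then show ?thesis
    using assms(2) by simp
qed

lemma poly_pderiv_root:
  fixes p :: "'a::idom poly"
  assumes "poly p a = 0"
  shows "poly (pderiv p) a = poly (synthetic_div p a) a"
proof -
  define q where "q = synthetic_div p a"
  have "p = [:-a, 1:] * q"
    unfolding q_def by (rule synthetic_div_root[OF assms])
  then have "pderiv p = [:-a, 1:] * pderiv q + q * pderiv [:-a, 1:]"
    by (simp only: pderiv_mult)
  then show ?thesis
    by (simp add: q_def pderiv_pCons)
qed

definition herglotz_sum :: "real \<Rightarrow> (complex \<Rightarrow> real) \<Rightarrow> complex set \<Rightarrow> complex \<Rightarrow> complex" where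
  "herglotz_sum b c S z = \<i> * of_real b + (\<Sum>t\<in>S. of_real (c t) * ((t + z) / (t - z)))"

locale circle_weights =
  fixes c :: "complex \<Rightarrow> real" and S :: "complex set"
  assumes finite_S: "finite S" and S_nonempty: "S \<noteq> {}"
    and S_unit: "S \<subseteq> sphere 0 1" and c_pos: "t \<in> S \<Longrightarrow> c t > 0"
begin

lemma norm_S: "t \<in> S \<Longrightarrow> cmod t = 1"
  using S_unit by auto

definition weight :: "complex \<Rightarrow> real" where
  "weight z = (\<Sum>t\<in>S. c t / (cmod (t - z))\<^sup>2)"

lemma weight_pos:
  assumes "z \<notin> S"
  shows "weight z > 0"
  unfolding weight_def
proof (intro sum_pos finite_S S_nonempty)
  fix t assume "t \<in> S"
  with assms have "t - z \<noteq> 0"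
    by auto
  with c_pos[OF \<open>t \<in> S\<close>] show "c t / (cmod (t - z))\<^sup>2 > 0"
    by simp
qed

definition denom :: "complex poly" where
  "denom = (\<Prod>t\<in>S. [:-t, 1:])"

definition cofactor :: "complex \<Rightarrow> complex poly" where
  "cofactor t = (\<Prod>u\<in>S - {t}. [:-u, 1:])"

lemma denom_split: "t \<in> S \<Longrightarrow> denom = [:-t, 1:] * cofactor t"
  unfolding denom_def cofactor_def using finite_S by (simp add: prod.remove)

lemma poly_denom_eq_0_iff: "poly denom z = 0 \<longleftrightarrow> z \<in> S"
  using finite_S by (simp add: denom_def poly_prod)

lemma poly_cofactor_eq_0_iff: "poly (cofactor t) z = 0 \<longleftrightarrow> z \<in> S - {t}"
  using finite_S by (simp add: cofactor_def poly_prod)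

lemma degree_denom: "degree denom = card S"
  by (simp add: denom_def degree_prod_sum_eq)

lemma degree_cofactor: "t \<in> S \<Longrightarrow> degree (cofactor t) = card S - 1"
  using finite_S by (simp add: cofactor_def degree_prod_sum_eq)

lemma lead_coeff_denom: "lead_coeff denom = 1"
  by (simp add: denom_def lead_coeff_prod)

lemma lead_coeff_cofactor: "lead_coeff (cofactor t) = 1"
  by (simp add: cofactor_def lead_coeff_prod)

end

locale herglotz_function = circle_weights +
  fixes b :: real
begin

abbreviation f :: "complex \<Rightarrow> complex" where
  "f \<equiv> herglotz_sum b c S"

lemma Re_f: "Re (f z) = (1 - (cmod z)\<^sup>2) * weight z"
proof -
  have "Re (f z) = (\<Sum>t\<in>S. Re (of_real (c t) * ((t + z) / (t - z))))"
    unfolding herglotz_sum_def plus_complex.sel Re_sum by simp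
  also have "\<dots> = (\<Sum>t\<in>S. (1 - (cmod z)\<^sup>2) * (c t / (cmod (t - z))\<^sup>2))"
    by (intro sum.cong refl) (subst Re_of_real_mult, simp add: Re_herglotz_kernel norm_S)
  finally show ?thesis
    by (simp add: weight_def sum_distrib_left)
qed

lemma f_zero_imp_unit:
  assumes "f z = 0" "z \<notin> S"
  shows "cmod z = 1"
proof -
  have "(1 - (cmod z)\<^sup>2) * weight z = 0"
    using assms(1) Re_f[of z] by simp
  then have "(cmod z)\<^sup>2 = 1"
    using weight_pos[OF assms(2)] by simp
  then show ?thesis
    using power2_eq_iff_nonneg[of "cmod z" 1] by simp
qed

definition f' :: "complex \<Rightarrow> complex" where
  "f' z = (\<Sum>t\<in>S. of_real (c t) * (2 * t / (t - z)\<^sup>2))"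

lemma has_field_derivative_f:
  assumes "z \<notin> S"
  shows "(f has_field_derivative f' z) (at z)"
proof -
  have kernel: "((\<lambda>z. (t + z) / (t - z)) has_field_derivative 2 * t / (t - z)\<^sup>2) (at z)"
    if "t \<in> S" for t
    using that assms by (auto intro!: derivative_eq_intros simp: field_simps power2_eq_square)
  have "((\<lambda>z. \<Sum>t\<in>S. of_real (c t) * ((t + z) / (t - z))) has_field_derivative f' z) (at z)"
    unfolding f'_def by (intro DERIV_sum DERIV_cmult kernel)
  then show ?thesis
    unfolding herglotz_sum_def[abs_def] using DERIV_add[OF DERIV_const[of "\<i> * of_real b"]] by simp
qed

lemma f'_on_circle:
  assumes "cmod z = 1" "z \<notin> S"
  shows "z * f' z = - 2 * of_real (weight z)"
proof -
  have "z * (of_real (c t) * (2 * t / (t - z)\<^sup>2)) = - 2 * of_real (c t / (cmod (t - z))\<^sup>2)"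
    if "t \<in> S" for t
  proof -
    have "(t - z)\<^sup>2 = - t * z * of_real ((cmod (t - z))\<^sup>2)"
      using norm_S[OF that] assms(1) by (rule unit_circle_diff_square)
    moreover have "t \<noteq> 0" "z \<noteq> 0" "t \<noteq> z"
      using norm_S[OF that] assms that by auto
    ultimately show ?thesis
      by (simp add: field_simps)
  qed
  then show ?thesis
    by (simp add: f'_def weight_def sum_distrib_left sum_negf)
qed

definition numer :: "complex poly" where
  "numer = smult (\<i> * of_real b) denom - (\<Sum>t\<in>S. smult (of_real (c t)) ([:t, 1:] * cofactor t))"

lemma poly_numer:
  assumes "z \<notin> S"
  shows "poly numer z = f z * poly denom z"
proof -
  have summand: "of_real (c t) * ((t + z) * poly (cofactor t) z)
      = - (of_real (c t) * ((t + z) / (t - z)) * poly denom z)"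
    if "t \<in> S" for t
  proof -
    have "t - z \<noteq> 0"
      using that assms by auto
    then show ?thesis
      by (simp add: denom_split[OF that] field_simps)
  qed
  have "(\<Sum>t\<in>S. of_real (c t) * ((t + z) * poly (cofactor t) z))
      = - (\<Sum>t\<in>S. of_real (c t) * ((t + z) / (t - z)) * poly denom z)"
    unfolding sum_negf[symmetric] by (rule sum.cong[OF refl]) (erule summand)
  then show ?thesis
    by (simp add: numer_def herglotz_sum_def poly_sum distrib_right sum_distrib_right)
qed

lemma poly_numer_S:
  assumes "t \<in> S"
  shows "poly numer t = - 2 * of_real (c t) * t * poly (cofactor t) t"
proof -
  have "poly numer t = - (\<Sum>u\<in>S. of_real (c u) * ((u + t) * poly (cofactor u) t))"
    using assms by (simp add: numer_def poly_sum poly_denom_eq_0_iff ring_distribs)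
  also have "\<dots> = - (of_real (c t) * ((t + t) * poly (cofactor t) t))"
    using assms finite_S by (subst sum.remove[of _ t]) (auto intro!: sum.neutral simp: poly_cofactor_eq_0_iff)
  finally show ?thesis
    by simp
qed

lemma poly_numer_S_nonzero: "t \<in> S \<Longrightarrow> poly numer t \<noteq> 0"
  using c_pos norm_S by (force simp: poly_numer_S poly_cofactor_eq_0_iff)

lemma coeff_numer: "coeff numer (card S) = \<i> * of_real b - (\<Sum>t\<in>S. of_real (c t))"
proof -
  have "degree ([:t, 1:] * cofactor t) = card S" "lead_coeff ([:t, 1:] * cofactor t) = 1" if "t \<in> S" for t
  proof -
    have "cofactor t \<noteq> 0"
      using lead_coeff_cofactor[of t] by auto
    then have "degree ([:t, 1:] * cofactor t) = 1 + degree (cofactor t)"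
      by (subst degree_mult_eq) auto
    then show "degree ([:t, 1:] * cofactor t) = card S"
      using finite_S S_nonempty degree_cofactor[OF that] by (simp add: card_gt_0_iff)
    show "lead_coeff ([:t, 1:] * cofactor t) = 1"
      unfolding lead_coeff_mult by (simp add: lead_coeff_cofactor)
  qed
  then show ?thesis
    using lead_coeff_denom by (simp add: numer_def coeff_sum flip: degree_denom)
qed

lemma degree_numer: "degree numer = card S"
proof (rule antisym)
  have "degree ([:t, 1:] * cofactor t) \<le> card S" if "t \<in> S" for t
    using degree_mult_le[of "[:t, 1:]" "cofactor t"] degree_cofactor[OF that] finite_S S_nonempty
    by (simp add: card_gt_0_iff)
  then show "degree numer \<le> card S"
    unfolding numer_def
    by (intro degree_diff_le order.trans[OF degree_smult_le] degree_sum_le finite_S) (auto simp: degree_denom)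
  have "Re (coeff numer (card S)) = - (\<Sum>t\<in>S. c t)"
    by (simp add: coeff_numer Re_sum)
  moreover have "(\<Sum>t\<in>S. c t) > 0"
    using c_pos by (intro sum_pos finite_S S_nonempty)
  ultimately show "card S \<le> degree numer"
    by (intro le_degree) auto
qed

lemma numer_nonzero: "numer \<noteq> 0"
  using degree_numer finite_S S_nonempty by (auto simp: card_gt_0_iff)

definition zeros :: "complex set" where
  "zeros = {z. poly numer z = 0}"

lemma finite_zeros: "finite zeros"
  unfolding zeros_def using numer_nonzero by (rule poly_roots_finite)

lemma zeros_not_S: "z \<in> zeros \<Longrightarrow> z \<notin> S"
  using poly_numer_S_nonzero by (auto simp: zeros_def)

lemma f_eq_0_iff: "z \<notin> S \<Longrightarrow> f z = 0 \<longleftrightarrow> z \<in> zeros"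
  by (simp add: zeros_def poly_numer poly_denom_eq_0_iff)

lemma norm_zeros: "z \<in> zeros \<Longrightarrow> cmod z = 1"
  using f_zero_imp_unit f_eq_0_iff zeros_not_S by blast

lemma pderiv_numer_zeros:
  assumes "z \<in> zeros"
  shows "poly (pderiv numer) z = f' z * poly denom z"
proof -
  have "z \<notin> S" and "f z = 0"
    using assms zeros_not_S f_eq_0_iff by auto
  have "((\<lambda>w. f w * poly denom w) has_field_derivative f' z * poly denom z + poly (pderiv denom) z * f z) (at z)"
    by (rule DERIV_mult[OF has_field_derivative_f[OF \<open>z \<notin> S\<close>] poly_DERIV])
  then have "((\<lambda>w. f w * poly denom w) has_field_derivative f' z * poly denom z) (at z)"
    using \<open>f z = 0\<close> by simp
  then have "(poly numer has_field_derivative f' z * poly denom z) (at z)"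
    by (rule has_field_derivative_transform_within_open[of _ _ _ "- S"])
      (use finite_S \<open>z \<notin> S\<close> poly_numer in \<open>auto simp: finite_imp_closed open_Compl\<close>)
  then show ?thesis
    using poly_DERIV[of numer z] by (rule DERIV_unique[symmetric])
qed

lemma card_zeros: "card zeros = card S"
proof -
  have "rsquarefree numer"
    unfolding rsquarefree_roots
  proof (intro allI notI)
    fix z assume z: "poly numer z = 0 \<and> poly (pderiv numer) z = 0"
    then have "z \<in> zeros"
      by (simp add: zeros_def)
    then have "z \<notin> S" "cmod z = 1"
      using zeros_not_S norm_zeros by auto
    then have "f' z \<noteq> 0"
      using f'_on_circle weight_pos by force
    moreover have "poly denom z \<noteq> 0"
      using \<open>z \<notin> S\<close> poly_denom_eq_0_iff by simp
    ultimately show False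
      using z pderiv_numer_zeros[OF \<open>z \<in> zeros\<close>] by simp
  qed
  then show ?thesis
    using card_roots_rsquarefree degree_numer by (simp add: zeros_def)
qed

(* The residue of 1/f at a zero t is 1/f'(t), and that of (t + z)/(t - z) is -2t;
   on the circle t f'(t) = -2 weight t. *)
definition inverse_weight :: "complex \<Rightarrow> real" where
  "inverse_weight t = 1 / (4 * weight t)"

lemma inverse_circle_weights: "circle_weights inverse_weight zeros"
proof
  show "finite zeros"
    by (rule finite_zeros)
  show "zeros \<noteq> {}"
    using card_zeros finite_S S_nonempty by auto
  show "zeros \<subseteq> sphere 0 1"
    using norm_zeros by auto
  show "inverse_weight t > 0" if "t \<in> zeros" for t
    using weight_pos zeros_not_S[OF that] by (simp add: inverse_weight_def)
qed

definition residue_poly :: "complex poly" where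
  "residue_poly = (\<Sum>t\<in>zeros. smult (of_real (inverse_weight t)) ([:t, 1:] * synthetic_div numer t))"

lemma poly_residue_poly:
  assumes "z \<notin> zeros"
  shows "poly residue_poly z = - poly numer z * (\<Sum>t\<in>zeros. of_real (inverse_weight t) * ((t + z) / (t - z)))"
proof -
  have summand: "of_real (inverse_weight t) * ((t + z) * poly (synthetic_div numer t) z)
      = - poly numer z * (of_real (inverse_weight t) * ((t + z) / (t - z)))" if "t \<in> zeros" for t
  proof -
    have "t \<noteq> z" "poly numer t = 0"
      using that assms by (auto simp: zeros_def)
    then have "poly (synthetic_div numer t) z = - poly numer z / (t - z)"
      using poly_synthetic_div_root[of numer t z] by (simp add: minus_divide_right)
    then show ?thesis
      by (simp add: mult_ac)
  qed
  have "poly residue_poly z = (\<Sum>t\<in>zeros. of_real (inverse_weight t) * ((t + z) * poly (synthetic_div numer t) z))"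
    by (simp add: residue_poly_def poly_sum algebra_simps)
  also have "\<dots> = (\<Sum>t\<in>zeros. - poly numer z * (of_real (inverse_weight t) * ((t + z) / (t - z))))"
    by (rule sum.cong[OF refl]) (erule summand)
  also have "\<dots> = - poly numer z * (\<Sum>t\<in>zeros. of_real (inverse_weight t) * ((t + z) / (t - z)))"
    by (simp only: sum_distrib_left)
  finally show ?thesis .
qed

lemma poly_residue_poly_zeros:
  assumes "z \<in> zeros"
  shows "poly residue_poly z = - poly denom z"
proof -
  have "poly (synthetic_div numer t) z = 0" if "t \<in> zeros - {z}" for t
    using that assms poly_synthetic_div_root[of numer t z] by (auto simp: zeros_def)
  then have "poly residue_poly z = of_real (inverse_weight z) * (2 * z * poly (synthetic_div numer z) z)"
    using assms finite_zeros
    by (simp add: residue_poly_def poly_sum sum.remove[of _ z] sum.neutral)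
  also have "poly (synthetic_div numer z) z = f' z * poly denom z"
    using assms poly_pderiv_root[of numer z] pderiv_numer_zeros by (simp add: zeros_def)
  also have "of_real (inverse_weight z) * (2 * z * (f' z * poly denom z))
      = of_real (inverse_weight z) * 2 * (z * f' z) * poly denom z"
    by (simp only: mult_ac)
  also have "\<dots> = - poly denom z"
    using f'_on_circle[OF norm_zeros zeros_not_S, OF assms assms] weight_pos[OF zeros_not_S[OF assms]]
    by (simp add: inverse_weight_def)
  finally show ?thesis .
qed

lemma degree_residue_poly: "degree residue_poly \<le> card S"
proof -
  have "degree ([:t, 1:] * synthetic_div numer t) \<le> card S" for t
    using degree_mult_le[of "[:t, 1:]" "synthetic_div numer t"] finite_S S_nonempty
    by (simp add: degree_synthetic_div degree_numer card_gt_0_iff)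
  then show ?thesis
    unfolding residue_poly_def
    by (intro degree_sum_le finite_zeros order.trans[OF degree_smult_le])
qed

lemma denom_eq_partial_fractions:
  assumes "z0 \<notin> S \<union> zeros"
  defines "C \<equiv> 1 / f z0 - (\<Sum>t\<in>zeros. of_real (inverse_weight t) * ((t + z0) / (t - z0)))"
  shows "denom = smult C numer - residue_poly"
proof (rule poly_eqI_degree[of "insert z0 zeros"])
  fix z assume "z \<in> insert z0 zeros"
  then show "poly denom z = poly (smult C numer - residue_poly) z"
  proof
    assume "z = z0"
    have "f z0 \<noteq> 0"
      using assms f_eq_0_iff by blast
    have "poly (smult C numer - residue_poly) z0
        = poly numer z0 * (C + (\<Sum>t\<in>zeros. of_real (inverse_weight t) * ((t + z0) / (t - z0))))"
      using poly_residue_poly[of z0] assms by (simp add: algebra_simps)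
    also have "\<dots> = poly numer z0 / f z0"
      by (simp add: C_def)
    also have "\<dots> = poly denom z0"
      using poly_numer[of z0] assms \<open>f z0 \<noteq> 0\<close> by simp
    finally show ?thesis
      using \<open>z = z0\<close> by simp
  next
    assume "z \<in> zeros"
    then show ?thesis
      using poly_residue_poly_zeros by (simp add: zeros_def)
  qed
next
  have "card (insert z0 zeros) = Suc (card S)"
    using assms finite_zeros card_zeros by simp
  moreover have "degree (smult C numer - residue_poly) \<le> card S"
    using degree_numer degree_residue_poly
    by (intro degree_diff_le order.trans[OF degree_smult_le]) auto
  ultimately show "degree denom < card (insert z0 zeros)"
    and "degree (smult C numer - residue_poly) < card (insert z0 zeros)"
    using degree_denom by auto
qed

lemma inverse_partial_fractions:
  obtains \<beta> where "\<And>z. z \<notin> S \<union> zeros \<Longrightarrow> 1 / f z = herglotz_sum \<beta> inverse_weight zeros z"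
proof -
  have "infinite (sphere 0 1 - (S \<union> zeros))"
    using finite_S finite_zeros by (intro Diff_infinite_finite infinite_unit_circle) auto
  then obtain z0 where "z0 \<in> sphere 0 1 - (S \<union> zeros)"
    using infinite_imp_nonempty by blast
  then have z0: "cmod z0 = 1" "z0 \<notin> S \<union> zeros"
    by auto
  define C where "C = 1 / f z0 - (\<Sum>t\<in>zeros. of_real (inverse_weight t) * ((t + z0) / (t - z0)))"
  have "Re (1 / f z0) = 0"
    using Re_f[of z0] z0(1) by (simp add: Re_divide')
  moreover have "Re (of_real (inverse_weight t) * ((t + z0) / (t - z0))) = 0" if "t \<in> zeros" for t
    using Re_herglotz_kernel[OF norm_zeros[OF that], of z0] z0(1) unfolding Re_of_real_mult by simp
  ultimately have "Re C = 0"
    unfolding C_def minus_complex.sel Re_sum by simp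
  have "1 / f z = herglotz_sum (Im C) inverse_weight zeros z" if z: "z \<notin> S \<union> zeros" for z
  proof -
    have "poly numer z \<noteq> 0" "poly denom z \<noteq> 0"
      using z by (auto simp: zeros_def poly_denom_eq_0_iff)
    have "poly denom z = poly numer z * (C + (\<Sum>t\<in>zeros. of_real (inverse_weight t) * ((t + z) / (t - z))))"
      using arg_cong[OF denom_eq_partial_fractions[OF z0(2), folded C_def], of "\<lambda>p. poly p z"]
        poly_residue_poly[of z] z
      by (simp add: algebra_simps)
    moreover have "f z = poly numer z / poly denom z"
      using poly_numer[of z] z \<open>poly denom z \<noteq> 0\<close> by simp
    ultimately have "1 / f z = C + (\<Sum>t\<in>zeros. of_real (inverse_weight t) * ((t + z) / (t - z)))"
      using \<open>poly numer z \<noteq> 0\<close> by simp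
    with \<open>Re C = 0\<close> show ?thesis
      by (simp add: herglotz_sum_def complex_eq_iff)
  qed
  then show ?thesis
    using that by blast
qed


end

lemma mem_Pm_iff:
  assumes "m \<ge> 1"
  shows "q \<in> Pm m \<longleftrightarrow>
    (\<exists>b c S. circle_weights c S \<and> card S = m \<and> (\<forall>z\<in>ball 0 1. q z = herglotz_sum b c S z))"
  (is "_ \<longleftrightarrow> ?herglotz")
proof
  assume "q \<in> Pm m"
  then obtain b a s where a: "\<forall>j\<in>{1..m}. a j > 0"
    and s: "\<forall>j\<in>{1..m}. cmod (s j) = 1" "inj_on s {1..m}"
    and q: "\<forall>z\<in>ball 0 1. q z = \<i> * of_real b + (\<Sum>j=1..m. of_real (a j) * ((s j + z) / (s j - z)))"
    unfolding Pm_def by blast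
  define c where "c = a \<circ> the_inv_into {1..m} s"
  have "circle_weights c (s ` {1..m})"
    by unfold_locales (use assms a s in \<open>auto simp: c_def the_inv_into_f_f\<close>)
  moreover have "card (s ` {1..m}) = m"
    using card_image[OF s(2)] by simp
  moreover have "c (s j) = a j" if "j \<in> {1..m}" for j
    using that s(2) by (simp only: c_def o_def the_inv_into_f_f)
  then have "herglotz_sum b c (s ` {1..m}) z
      = \<i> * of_real b + (\<Sum>j=1..m. of_real (a j) * ((s j + z) / (s j - z)))" for z
    unfolding herglotz_sum_def sum.reindex[OF s(2)] by (auto intro!: sum.cong)
  ultimately show ?herglotz
    using q by metis
next
  assume ?herglotz
  then obtain b c S where "circle_weights c S" "card S = m"
    and q: "\<forall>z\<in>ball 0 1. q z = herglotz_sum b c S z"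
    by blast
  interpret circle_weights c S
    by fact
  obtain h where h: "bij_betw h {1..m} S"
    using ex_bij_betw_nat_finite_1[OF finite_S] \<open>card S = m\<close> by auto
  have "(\<Sum>j=1..m. of_real ((c \<circ> h) j) * ((h j + z) / (h j - z))) = (\<Sum>t\<in>S. of_real (c t) * ((t + z) / (t - z)))"
    for z
    using sum.reindex_bij_betw[OF h, of "\<lambda>t. of_real (c t) * ((t + z) / (t - z))"] by simp
  then have "\<forall>z\<in>ball 0 1. q z = \<i> * of_real b + (\<Sum>j=1..m. of_real ((c \<circ> h) j) * ((h j + z) / (h j - z)))"
    using q by (simp add: herglotz_sum_def)
  moreover have "\<forall>j\<in>{1..m}. (c \<circ> h) j > 0" "\<forall>j\<in>{1..m}. cmod (h j) = 1" "inj_on h {1..m}"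
    using h c_pos norm_S by (auto simp: bij_betw_def)
  ultimately show "q \<in> Pm m"
    unfolding Pm_def by blast
qed

lemma inverse_mem_Pm:
  assumes "m \<ge> 1" "q \<in> Pm m"
  shows "(\<lambda>z. 1 / q z) \<in> Pm m"
proof -
  obtain b c S where "circle_weights c S" "card S = m"
    and q: "\<forall>z\<in>ball 0 1. q z = herglotz_sum b c S z"
    using assms mem_Pm_iff by blast
  interpret herglotz_function c S b
    by (rule herglotz_function.intro) fact
  obtain \<beta> where \<beta>: "\<And>z. z \<notin> S \<union> zeros \<Longrightarrow> 1 / f z = herglotz_sum \<beta> inverse_weight zeros z"
    using inverse_partial_fractions by blast
  have "z \<notin> S \<union> zeros" if "z \<in> ball 0 1" for z
    using that norm_S norm_zeros by force
  then have "\<forall>z\<in>ball 0 1. 1 / q z = herglotz_sum \<beta> inverse_weight zeros z"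
    using q \<beta> by simp
  then show ?thesis
    using mem_Pm_iff[OF assms(1)] inverse_circle_weights card_zeros \<open>card S = m\<close> by blast
qed

theorem lemma6p13:
  fixes m :: nat
  assumes "m \<ge> 1"
  shows "(\<forall>p\<in>Pm m. (\<lambda>z. 1 / p z) \<in> Pm m)
       \<and> (\<forall>q\<in>Pm m. \<exists>p\<in>Pm m. \<forall>z\<in>ball 0 1. q z = 1 / p z)
       \<and> (\<forall>p\<in>Pm m. \<forall>z\<in>ball 0 1. 1 / (1 / p z) = p z)"
proof (intro conjI ballI)
  fix p assume "p \<in> Pm m"
  then show "(\<lambda>z. 1 / p z) \<in> Pm m"
    using inverse_mem_Pm[OF assms] by blast
next
  fix q assume "q \<in> Pm m"
  then show "\<exists>p\<in>Pm m. \<forall>z\<in>ball 0 1. q z = 1 / p z"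
    using inverse_mem_Pm[OF assms] by (intro bexI[of _ "\<lambda>z. 1 / q z"]) auto
qed simp

end
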